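(* Let $I$ be a finite set and let $T$ be a tree on $I$. For any subset $J \subseteq I$ there exists a unique tree $T_J$ on the leaf set $J$ such that $T_J \sqcup |_{I\setminus J} \leq T$ in the poset $\operatorname{For}(I)$.
   Context: A tree on a finite set $I$ is a (non-planar) rooted binary tree whose leaves are bijectively labeled by $I$: its vertices are inner vertices (of valence $3$) and leaves and the root (of valence $1$), and edges are oriented towards the root; a tree consisting of a single leaf (no inner vertices) is allowed. A forest on $I$ is a set of trees whose leaf sets form a partition of $I$; $\sqcup$ denotes disjoint union of forests. For forests $F,G$ on $I$, we set $F \leq G$ if there is a continuous (topological) map from $F$ to $G$ which (D1) is increasing with respect to the orientation towards the root, (D2) maps inner vertices to inner vertices injectively, (D3) restricts to the identity of $I$ on leaves, and (D4) is injective on each tree of $F$. This defines a poset $\operatorname{For}(I)$. For $J \subseteq I$, $|_J$ denotes the forest on $J$ with no inner vertices (each element of $J$ is a one-leaf tree). *)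

theory Defs
  imports Main
begin

text \<open>A (non-planar, rooted, binary, leaf-labelled) tree on a finite set I is encoded by
its set of vertices below the root, each vertex being identified with the set of leaves
lying below it (its cluster): leaves are the singletons {i}, inner vertices are the
non-singleton clusters, the top cluster I is the vertex adjacent to the root, and every
inner vertex has exactly two children (a split of its cluster into two nonempty disjoint
clusters). This is the standard bijection between such trees and binary hierarchies.\<close>

definition is_tree :: "'a set \<Rightarrow> 'a set set \<Rightarrow> bool" where
  "is_tree I T \<longleftrightarrow>
     I \<in> T \<and>
     (\<forall>C\<in>T. C \<noteq> {} \<and> C \<subseteq> I) \<and>
     (\<forall>i\<in>I. {i} \<in> T) \<and>
     (\<forall>C\<in>T. \<forall>D\<in>T. C \<subseteq> D \<or> D \<subseteq> C \<or> C \<inter> D = {}) \<and>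
     (\<forall>C\<in>T. \<not> is_singleton C \<longrightarrow>
        (\<exists>A\<in>T. \<exists>B\<in>T. A \<noteq> {} \<and> B \<noteq> {} \<and> A \<inter> B = {} \<and> A \<union> B = C))"

definition leaves :: "'a set set \<Rightarrow> 'a set" where
  "leaves T = \<Union>T"

definition is_forest :: "'a set \<Rightarrow> 'a set set set \<Rightarrow> bool" where
  "is_forest I F \<longleftrightarrow>
     (\<forall>T\<in>F. is_tree (leaves T) T) \<and>
     (\<Union>T\<in>F. leaves T) = I \<and>
     (\<forall>T1\<in>F. \<forall>T2\<in>F. T1 \<noteq> T2 \<longrightarrow> leaves T1 \<inter> leaves T2 = {})"

definition trivial_forest :: "'a set \<Rightarrow> 'a set set set" where
  "trivial_forest J = (\<lambda>i. {{i}}) ` J"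

text \<open>A map F \<rightarrow> G satisfying (D1)-(D4) is determined by where it
sends vertices (edges are then sent to the unique increasing paths between the images of
their endpoints; roots go to any point above the image of the top vertex). Vertices of
different trees of a forest are distinct clusters, so the map is a function phi on
clusters. Conditions:
 - continuity: each (connected) tree of F maps into a single tree S of G;
 - (D1) increasing: A below C in T implies phi A below phi C;
 - (D2) inner vertices go to inner vertices, injectively;
 - (D3) identity on leaves;
 - (D4) injective on each tree: injective on its vertices, and the images of the two
   edges into an inner vertex C (from children A, B) are not mapped to overlapping paths,
   i.e. phi A and phi B lie in different branches below phi C.\<close>
definition forest_le :: "'a set \<Rightarrow> 'a set set set \<Rightarrow> 'a set set set \<Rightarrow> bool" where
  "forest_le I F G \<longleftrightarrow> is_forest I F \<and> is_forest I G \<and>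
    (\<exists>\<phi> :: 'a set \<Rightarrow> 'a set.
       (\<forall>T\<in>F. \<exists>S\<in>G. \<forall>C\<in>T. \<phi> C \<in> S) \<and>
       (\<forall>T\<in>F. \<forall>A\<in>T. \<forall>C\<in>T. A \<subseteq> C \<longrightarrow> \<phi> A \<subseteq> \<phi> C) \<and>
       (\<forall>C\<in>\<Union>F. \<not> is_singleton C \<longrightarrow> \<not> is_singleton (\<phi> C)) \<and>
       inj_on \<phi> {C\<in>\<Union>F. \<not> is_singleton C} \<and>
       (\<forall>C\<in>\<Union>F. is_singleton C \<longrightarrow> \<phi> C = C) \<and>
       (\<forall>T\<in>F. inj_on \<phi> T) \<and>
       (\<forall>T\<in>F. \<forall>A\<in>T. \<forall>B\<in>T. \<forall>C\<in>T.
          A \<noteq> {} \<and> B \<noteq> {} \<and> A \<inter> B = {} \<and> A \<union> B = C \<longrightarrow>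
          \<not> (\<exists>D\<in>\<Union>G. D \<subset> \<phi> C \<and> \<phi> A \<subseteq> D \<and> \<phi> B \<subseteq> D)))"

end

theory Submission
  imports Defs
begin

text \<open>
  With vertices encoded as clusters, the restriction of \<open>T\<close> to \<open>J\<close> is
  \<open>T\<^sub>J = {C \<inter> J | C \<in> T, C \<inter> J \<noteq> {}}\<close>, and sending a cluster \<open>D\<close> of \<open>T\<^sub>J\<close> to its lowest
  common ancestor \<open>lca T D\<close> (the smallest cluster of \<open>T\<close> containing \<open>D\<close>) witnesses
  \<open>T\<^sub>J \<squnion> |\<^bsub>I - J\<^esub> \<le> T\<close>.

  Conversely, let \<open>\<phi>\<close> witness \<open>S \<squnion> |\<^bsub>I - J\<^esub> \<le> T\<close>. Induction over the clusters of \<open>S\<close> gives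
  \<open>\<phi> = lca T\<close>: for a split \<open>C = A \<union> B\<close>, \<open>lca T C\<close> lies below \<open>\<phi> C\<close> and above \<open>\<phi> A\<close> and
  \<open>\<phi> B\<close>, so (D4) forces equality. Hence \<open>lca T\<close> is injective on \<open>S\<close>, which makes the
  lowest common ancestors of two sibling clusters disjoint (nested ones would give their
  parent the same ancestor) and therefore \<open>lca T C \<inter> J = C\<close>. Thus \<open>S \<subseteq> T\<^sub>J\<close>, and a binary
  hierarchy contained in another one on the same leaves equals it.
\<close>

lemma is_tree_top: "is_tree I T \<Longrightarrow> I \<in> T"
  by (simp add: is_tree_def)

lemma is_tree_memD: "is_tree I T \<Longrightarrow> C \<in> T \<Longrightarrow> C \<noteq> {} \<and> C \<subseteq> I"
  by (simp add: is_tree_def)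

lemma is_tree_leaf: "is_tree I T \<Longrightarrow> i \<in> I \<Longrightarrow> {i} \<in> T"
  by (simp add: is_tree_def)

lemma is_tree_laminar:
  "is_tree I T \<Longrightarrow> C \<in> T \<Longrightarrow> D \<in> T \<Longrightarrow> C \<subseteq> D \<or> D \<subseteq> C \<or> C \<inter> D = {}"
  by (simp add: is_tree_def)

lemma is_tree_split:
  assumes "is_tree I T" "C \<in> T" "\<not> is_singleton C"
  obtains A B where "A \<in> T" "B \<in> T" "A \<noteq> {}" "B \<noteq> {}" "A \<inter> B = {}" "A \<union> B = C"
  using assms unfolding is_tree_def by (elim conjE) meson

lemma is_tree_finite: "finite I \<Longrightarrow> is_tree I T \<Longrightarrow> finite T"
  by (meson Pow_iff finite_Pow_iff finite_subset is_tree_memD subsetI)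

lemma is_tree_psubset_child:
  assumes "is_tree I T" "A \<in> T" "B \<in> T" "C \<in> T" "A \<inter> B = {}" "C \<subset> A \<union> B"
  shows "C \<subseteq> A \<or> C \<subseteq> B"
  using is_tree_laminar[OF assms(1,4,2)] is_tree_laminar[OF assms(1,4,3)] assms(5,6)
    is_tree_memD[OF assms(1,4)] by auto

lemma not_singleton_mono: "\<not> is_singleton X \<Longrightarrow> X \<noteq> {} \<Longrightarrow> X \<subseteq> Y \<Longrightarrow> \<not> is_singleton Y"
  by (metis is_singleton_def subset_singleton_iff)

definition lca :: "'a set set \<Rightarrow> 'a set \<Rightarrow> 'a set" where
  "lca T D = \<Inter>{C\<in>T. D \<subseteq> C}"

lemma lca_mem:
  assumes "finite I" "is_tree I T" "D \<noteq> {}" "D \<subseteq> I"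
  shows "lca T D \<in> T"
proof -
  have "\<Inter>{C\<in>T. D \<subseteq> C} \<in> {C\<in>T. D \<subseteq> C}"
  proof (rule Inter_in_chain)
    show "finite {C\<in>T. D \<subseteq> C}" using is_tree_finite[OF assms(1,2)] by simp
    show "{C\<in>T. D \<subseteq> C} \<noteq> {}" using is_tree_top[OF assms(2)] assms(4) by blast
    show "subset.chain UNIV {C\<in>T. D \<subseteq> C}"
      unfolding subset_chain_def
    proof (intro conjI ballI)
      fix X Y assume "X \<in> {C\<in>T. D \<subseteq> C}" "Y \<in> {C\<in>T. D \<subseteq> C}"
      then show "X \<subseteq> Y \<or> Y \<subseteq> X"
        using is_tree_laminar[OF assms(2), of X Y] assms(3) by auto
    qed simp
  qed
  then show ?thesis unfolding lca_def by blast
qed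

lemma lca_upper: "D \<subseteq> lca T D"
  unfolding lca_def by blast

lemma lca_least: "C \<in> T \<Longrightarrow> D \<subseteq> C \<Longrightarrow> lca T D \<subseteq> C"
  unfolding lca_def by blast

lemma lca_mono: "A \<subseteq> C \<Longrightarrow> lca T A \<subseteq> lca T C"
  unfolding lca_def by (rule Inf_superset_mono) blast

lemma lca_eq: "C \<in> T \<Longrightarrow> lca T C = C"
  by (simp add: lca_least lca_upper subset_antisym)

lemma lca_Un_least: "D \<in> T \<Longrightarrow> lca T A \<subseteq> D \<Longrightarrow> lca T B \<subseteq> D \<Longrightarrow> lca T (A \<union> B) \<subseteq> D"
  using lca_upper[of A T] lca_upper[of B T] lca_least[of D T "A \<union> B"] by blast

lemma lca_Un_eq_right:
  assumes "lca T X \<subseteq> lca T Y" "lca T Y \<in> T"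
  shows "lca T (X \<union> Y) = lca T Y"
proof (rule subset_antisym)
  show "lca T (X \<union> Y) \<subseteq> lca T Y" by (rule lca_Un_least[OF assms(2,1) order_refl])
  show "lca T Y \<subseteq> lca T (X \<union> Y)" by (rule lca_mono) simp
qed

lemma lca_Un_overlap:
  assumes "is_tree I T" "lca T A \<in> T" "lca T B \<in> T" "lca T A \<inter> lca T B \<noteq> {}"
  shows "lca T (A \<union> B) = lca T A \<or> lca T (A \<union> B) = lca T B"
proof -
  have "lca T A \<subseteq> lca T B \<or> lca T B \<subseteq> lca T A"
    using is_tree_laminar[OF assms(1-3)] assms(4) by auto
  then show ?thesis
    using lca_Un_eq_right[OF _ assms(3), of A] lca_Un_eq_right[OF _ assms(2), of B]
    by (auto simp: Un_commute)
qed

definition restrict_tree :: "'a set \<Rightarrow> 'a set set \<Rightarrow> 'a set set" where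
  "restrict_tree J T = {C \<inter> J | C. C \<in> T \<and> C \<inter> J \<noteq> {}}"

lemma restrict_tree_memI: "C \<in> T \<Longrightarrow> C \<inter> J \<noteq> {} \<Longrightarrow> C \<inter> J \<in> restrict_tree J T"
  unfolding restrict_tree_def by blast

lemma lca_Int_restrict_tree: "X \<in> restrict_tree J T \<Longrightarrow> lca T X \<inter> J = X"
  unfolding restrict_tree_def using lca_upper[of X T] lca_least[of _ T X] by blast

lemma restrict_tree_split:
  assumes "finite I" "is_tree I T" "J \<subseteq> I"
    and X: "X \<in> restrict_tree J T" "\<not> is_singleton X"
  shows "\<exists>A\<in>restrict_tree J T. \<exists>B\<in>restrict_tree J T. A \<noteq> {} \<and> B \<noteq> {} \<and> A \<inter> B = {} \<and> A \<union> B = X"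
proof -
  have "X \<noteq> {}" "X \<subseteq> I" using X(1) assms(3) unfolding restrict_tree_def by auto
  then have M: "lca T X \<in> T" by (rule lca_mem[OF assms(1,2)])
  have MJ: "lca T X \<inter> J = X" by (rule lca_Int_restrict_tree[OF X(1)])
  have "\<not> is_singleton (lca T X)"
    using not_singleton_mono[OF X(2) \<open>X \<noteq> {}\<close> lca_upper] .
  then obtain A B where AB: "A \<in> T" "B \<in> T" "A \<noteq> {}" "B \<noteq> {}" "A \<inter> B = {}" "A \<union> B = lca T X"
    by (rule is_tree_split[OF assms(2) M])
  have meets: "Y \<inter> J \<noteq> {}" if "Y \<noteq> {}" "Z \<in> T" "Y \<inter> Z = {}" "Y \<union> Z = lca T X" for Y Z
  proof
    assume "Y \<inter> J = {}"
    then have "X \<subseteq> Z" using MJ that(4) by blast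
    then have "lca T X \<subseteq> Z" by (rule lca_least[OF that(2)])
    then show False using that by blast
  qed
  have "A \<inter> J \<noteq> {}" by (rule meets[OF AB(3,2,5,6)])
  moreover have "B \<inter> J \<noteq> {}" by (rule meets[OF AB(4,1)]) (use AB(5,6) in auto)
  ultimately have "A \<inter> J \<in> restrict_tree J T" "B \<inter> J \<in> restrict_tree J T"
    using restrict_tree_memI AB(1,2) by blast+
  moreover have "(A \<inter> J) \<inter> (B \<inter> J) = {}" "(A \<inter> J) \<union> (B \<inter> J) = X" using AB(5,6) MJ by blast+
  ultimately show ?thesis
    using \<open>A \<inter> J \<noteq> {}\<close> \<open>B \<inter> J \<noteq> {}\<close> by (intro bexI[of _ "A \<inter> J"] bexI[of _ "B \<inter> J"]) simp_all
qed

lemma is_tree_restrict_tree: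
  assumes "finite I" "is_tree I T" "J \<subseteq> I" "J \<noteq> {}"
  shows "is_tree J (restrict_tree J T)"
  unfolding is_tree_def
proof (intro conjI ballI impI)
  show "J \<in> restrict_tree J T"
    using restrict_tree_memI[OF is_tree_top[OF assms(2)], of J] assms(3,4) by (simp add: Int_absorb1)
next
  fix C assume "C \<in> restrict_tree J T"
  then show "C \<noteq> {}" "C \<subseteq> J" unfolding restrict_tree_def by blast+
next
  fix i assume "i \<in> J"
  then show "{i} \<in> restrict_tree J T"
    using restrict_tree_memI[OF is_tree_leaf[OF assms(2)], of i J] assms(3) by auto
next
  fix C D assume "C \<in> restrict_tree J T" "D \<in> restrict_tree J T"
  then obtain C' D' where "C' \<in> T" "D' \<in> T" "C = C' \<inter> J" "D = D' \<inter> J"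
    unfolding restrict_tree_def by blast
  then show "C \<subseteq> D \<or> D \<subseteq> C \<or> C \<inter> D = {}"
    using is_tree_laminar[OF assms(2), of C' D'] by auto
next
  fix X assume "X \<in> restrict_tree J T" "\<not> is_singleton X"
  then show "\<exists>A\<in>restrict_tree J T. \<exists>B\<in>restrict_tree J T. A \<noteq> {} \<and> B \<noteq> {} \<and> A \<inter> B = {} \<and> A \<union> B = X"
    by (rule restrict_tree_split[OF assms(1-3)])
qed

lemma leaves_eq: "is_tree I T \<Longrightarrow> leaves T = I"
  unfolding leaves_def using is_tree_top[of I T] is_tree_memD[of I T] by blast

lemma is_forest_memD: "is_forest I F \<Longrightarrow> S \<in> F \<Longrightarrow> C \<in> S \<Longrightarrow> C \<noteq> {} \<and> C \<subseteq> I"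
  unfolding is_forest_def using is_tree_memD leaves_def by fastforce

lemma is_forest_singleton: "is_tree I T \<Longrightarrow> is_forest I {T}"
  unfolding is_forest_def using leaves_eq[of I T] by auto

lemma is_forest_insert_trivial_forest:
  assumes "is_tree J S" "J \<subseteq> I"
  shows "is_forest I (insert S (trivial_forest (I - J)))"
proof -
  have "is_tree {i} {{i}}" for i :: 'a
    unfolding is_tree_def is_singleton_def by auto
  moreover have "leaves {{i}} = {i}" for i :: 'a
    unfolding leaves_def by simp
  ultimately show ?thesis
    unfolding is_forest_def trivial_forest_def using assms leaves_eq[OF assms(1)] by auto
qed

lemma inj_on_lca_imp_forest_le:
  assumes "finite I" "is_tree I T" "is_forest I F" "inj_on (lca T) (\<Union>F)"
  shows "forest_le I F {T}"
proof -
  have mem: "C \<noteq> {} \<and> C \<subseteq> I" if "C \<in> \<Union>F" for C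
    using that by (auto dest: is_forest_memD[OF assms(3)])
  have into: "\<forall>S\<in>F. \<exists>S'\<in>{T}. \<forall>C\<in>S. lca T C \<in> S'"
  proof (intro ballI bexI[OF _ singletonI])
    fix S C assume "S \<in> F" "C \<in> S"
    then have "C \<noteq> {} \<and> C \<subseteq> I" using mem by blast
    then show "lca T C \<in> T" using lca_mem[OF assms(1,2)] by simp
  qed
  have mono: "\<forall>S\<in>F. \<forall>A\<in>S. \<forall>C\<in>S. A \<subseteq> C \<longrightarrow> lca T A \<subseteq> lca T C"
    by (simp add: lca_mono)
  have inner: "\<forall>C\<in>\<Union>F. \<not> is_singleton C \<longrightarrow> \<not> is_singleton (lca T C)"
  proof (intro ballI impI)
    fix C assume "C \<in> \<Union>F" "\<not> is_singleton C"
    then show "\<not> is_singleton (lca T C)" using mem not_singleton_mono[OF _ _ lca_upper] by blast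
  qed
  have inj_inner: "inj_on (lca T) {C\<in>\<Union>F. \<not> is_singleton C}"
    by (rule inj_on_subset[OF assms(4)]) auto
  have leaf: "\<forall>C\<in>\<Union>F. is_singleton C \<longrightarrow> lca T C = C"
  proof (intro ballI impI)
    fix C assume "C \<in> \<Union>F" "is_singleton C"
    then obtain x where "C = {x}" by (auto elim: is_singletonE)
    moreover have "x \<in> I" using mem[OF \<open>C \<in> \<Union>F\<close>] \<open>C = {x}\<close> by simp
    ultimately show "lca T C = C" using lca_eq[OF is_tree_leaf[OF assms(2)]] by simp
  qed
  have inj_tree: "\<forall>S\<in>F. inj_on (lca T) S"
    using assms(4) by (meson Union_upper inj_on_subset)
  have sep: "\<forall>S\<in>F. \<forall>A\<in>S. \<forall>B\<in>S. \<forall>C\<in>S. A \<noteq> {} \<and> B \<noteq> {} \<and> A \<inter> B = {} \<and> A \<union> B = C \<longrightarrow>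
      \<not> (\<exists>D\<in>\<Union>{T}. D \<subset> lca T C \<and> lca T A \<subseteq> D \<and> lca T B \<subseteq> D)"
  proof (intro ballI impI notI)
    fix S A B C assume "A \<noteq> {} \<and> B \<noteq> {} \<and> A \<inter> B = {} \<and> A \<union> B = C"
      and "\<exists>D\<in>\<Union>{T}. D \<subset> lca T C \<and> lca T A \<subseteq> D \<and> lca T B \<subseteq> D"
    then obtain D where "D \<in> T" "D \<subset> lca T (A \<union> B)" "lca T A \<subseteq> D" "lca T B \<subseteq> D" by auto
    then show False using lca_Un_least[of D T A B] by auto
  qed
  show ?thesis
    unfolding forest_le_def
    using assms(3) is_forest_singleton[OF assms(2)] into mono inner inj_inner leaf inj_tree sep
    by (intro conjI exI[where x = "lca T"]) assumption+
qed

lemma inj_on_lca_restrict_forest: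
  assumes "is_tree I T"
  shows "inj_on (lca T) (\<Union>(insert (restrict_tree J T) (trivial_forest (I - J))))"
proof (rule inj_on_inverseI)
  fix X assume "X \<in> \<Union>(insert (restrict_tree J T) (trivial_forest (I - J)))"
  then consider "X \<in> restrict_tree J T" | i where "i \<in> I - J" "X = {i}"
    unfolding trivial_forest_def by auto
  then show "(\<lambda>Z. if Z \<inter> J = {} then Z else Z \<inter> J) (lca T X) = X"
  proof cases
    case 1
    then show ?thesis using lca_Int_restrict_tree[OF 1] unfolding restrict_tree_def by auto
  next
    case 2
    then show ?thesis using lca_eq[OF is_tree_leaf[OF assms]] by auto
  qed
qed

lemma forest_le_treeE:
  assumes "forest_le I F {T}" "S \<in> F"
  obtains \<phi> where "\<forall>C\<in>S. \<phi> C \<in> T"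
    "\<forall>A\<in>S. \<forall>C\<in>S. A \<subseteq> C \<longrightarrow> \<phi> A \<subseteq> \<phi> C"
    "\<forall>C\<in>S. is_singleton C \<longrightarrow> \<phi> C = C"
    "inj_on \<phi> S"
    "\<forall>A\<in>S. \<forall>B\<in>S. \<forall>C\<in>S. A \<noteq> {} \<and> B \<noteq> {} \<and> A \<inter> B = {} \<and> A \<union> B = C \<longrightarrow>
       \<not> (\<exists>D\<in>T. D \<subset> \<phi> C \<and> \<phi> A \<subseteq> D \<and> \<phi> B \<subseteq> D)"
proof -
  from assms(1) obtain \<phi> where
    into: "\<forall>S\<in>F. \<exists>S'\<in>{T}. \<forall>C\<in>S. \<phi> C \<in> S'" and
    mono: "\<forall>S\<in>F. \<forall>A\<in>S. \<forall>C\<in>S. A \<subseteq> C \<longrightarrow> \<phi> A \<subseteq> \<phi> C" and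
    leaf: "\<forall>C\<in>\<Union>F. is_singleton C \<longrightarrow> \<phi> C = C" and
    inj: "\<forall>S\<in>F. inj_on \<phi> S" and
    sep: "\<forall>S\<in>F. \<forall>A\<in>S. \<forall>B\<in>S. \<forall>C\<in>S. A \<noteq> {} \<and> B \<noteq> {} \<and> A \<inter> B = {} \<and> A \<union> B = C \<longrightarrow>
       \<not> (\<exists>D\<in>\<Union>{T}. D \<subset> \<phi> C \<and> \<phi> A \<subseteq> D \<and> \<phi> B \<subseteq> D)"
    unfolding forest_le_def by (elim conjE exE) (rule that)
  show ?thesis
    by (rule that[of \<phi>]) (use assms(2) into mono leaf inj sep in auto)
qed

lemma tree_map_eq_lca:
  assumes "finite I" "is_tree I T" "is_tree J S" "J \<subseteq> I"
    and into: "\<forall>C\<in>S. \<phi> C \<in> T"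
    and mono: "\<forall>A\<in>S. \<forall>C\<in>S. A \<subseteq> C \<longrightarrow> \<phi> A \<subseteq> \<phi> C"
    and leaf: "\<forall>C\<in>S. is_singleton C \<longrightarrow> \<phi> C = C"
    and sep: "\<forall>A\<in>S. \<forall>B\<in>S. \<forall>C\<in>S. A \<noteq> {} \<and> B \<noteq> {} \<and> A \<inter> B = {} \<and> A \<union> B = C \<longrightarrow>
       \<not> (\<exists>D\<in>T. D \<subset> \<phi> C \<and> \<phi> A \<subseteq> D \<and> \<phi> B \<subseteq> D)"
    and "C \<in> S"
  shows "\<phi> C = lca T C"
  using \<open>C \<in> S\<close>
proof (induction "card C" arbitrary: C rule: less_induct)
  case less
  have C: "C \<noteq> {}" "C \<subseteq> I" using is_tree_memD[OF assms(3) less.prems] assms(4) by auto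
  show ?case
  proof (cases "is_singleton C")
    case True
    then obtain x where "C = {x}" by (auto elim: is_singletonE)
    then have "C \<in> T" using is_tree_leaf[OF assms(2)] C(2) by simp
    then show ?thesis using leaf less.prems True lca_eq by metis
  next
    case False
    then obtain A B where AB: "A \<in> S" "B \<in> S" "A \<noteq> {}" "B \<noteq> {}" "A \<inter> B = {}" "A \<union> B = C"
      by (rule is_tree_split[OF assms(3) less.prems])
    have "finite C" using C(2) assms(1) finite_subset by blast
    then have "card A < card C" "card B < card C"
      using AB by (auto intro!: psubset_card_mono)
    then have IH: "\<phi> A = lca T A" "\<phi> B = lca T B" using less.hyps AB(1,2) by auto
    have "\<phi> A \<subseteq> \<phi> C" "\<phi> B \<subseteq> \<phi> C"
      using mono[rule_format, OF AB(1) less.prems] mono[rule_format, OF AB(2) less.prems] AB(6) by auto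
    then have "C \<subseteq> \<phi> C" using IH lca_upper[of A T] lca_upper[of B T] AB(6) by blast
    moreover have "\<phi> C \<in> T" using into less.prems by blast
    ultimately have "lca T C \<subseteq> \<phi> C" by (rule lca_least[rotated])
    moreover have "\<phi> A \<subseteq> lca T C" "\<phi> B \<subseteq> lca T C"
      using IH lca_mono[of A C T] lca_mono[of B C T] AB(6) by auto
    moreover have "lca T C \<in> T" using lca_mem[OF assms(1,2) C] .
    moreover have "\<not> (\<exists>D\<in>T. D \<subset> \<phi> C \<and> \<phi> A \<subseteq> D \<and> \<phi> B \<subseteq> D)"
      using sep[rule_format, OF AB(1,2) less.prems] AB(3-6) by blast
    ultimately show ?thesis by blast
  qed
qed

lemma lca_children_disjoint:
  assumes "finite I" "is_tree I T" "is_tree J S" "J \<subseteq> I" "inj_on (lca T) S"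
    and "A \<in> S" "B \<in> S" "A \<union> B \<in> S" "A \<noteq> {}" "B \<noteq> {}" "A \<inter> B = {}"
  shows "lca T A \<inter> lca T B = {}"
proof (rule ccontr)
  assume "lca T A \<inter> lca T B \<noteq> {}"
  moreover have "lca T A \<in> T" "lca T B \<in> T"
    using lca_mem[OF assms(1,2)] is_tree_memD[OF assms(3)] assms(4,6,7) by (meson order_trans)+
  ultimately have "lca T (A \<union> B) = lca T A \<or> lca T (A \<union> B) = lca T B"
    using lca_Un_overlap[OF assms(2)] by blast
  then have "A \<union> B = A \<or> A \<union> B = B" using assms(5-8) by (auto dest: inj_onD)
  then show False using assms(9-11) by blast
qed

lemma inj_on_lca_Int_eq:
  assumes "finite I" "is_tree I T" "is_tree J S" "J \<subseteq> I" "inj_on (lca T) S" "C \<in> S"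
  shows "lca T C \<inter> J = C"
proof -
  have C: "C \<noteq> {}" "C \<subseteq> J" using is_tree_memD[OF assms(3,6)] by auto
  have "j \<in> C" if j: "j \<in> lca T C" "j \<in> J" for j
  proof (rule ccontr)
    assume "j \<notin> C"
    have "finite J" using assms(1,4) finite_subset by blast
    define E where "E = lca S (insert j C)"
    have E: "E \<in> S" unfolding E_def using lca_mem[OF \<open>finite J\<close> assms(3), of "insert j C"] j(2) C(2) by simp
    have jCE: "insert j C \<subseteq> E" unfolding E_def by (rule lca_upper)
    have "\<not> is_singleton (insert j C)" using C(1) \<open>j \<notin> C\<close> unfolding is_singleton_def by blast
    then have "\<not> is_singleton E" using not_singleton_mono jCE by blast
    then obtain A B where AB: "A \<in> S" "B \<in> S" "A \<noteq> {}" "B \<noteq> {}" "A \<inter> B = {}" "A \<union> B = E"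
      by (rule is_tree_split[OF assms(3) E])
    have False if "X \<in> S" "Y \<in> S" "X \<noteq> {}" "Y \<noteq> {}" "X \<inter> Y = {}" "X \<union> Y = E" "C \<subseteq> X" for X Y
    proof -
      have "j \<notin> X"
      proof
        assume "j \<in> X"
        then have "E \<subseteq> X" unfolding E_def using lca_least[OF that(1)] that(7) by blast
        then show False using that(4-6) by blast
      qed
      then have "j \<in> lca T Y" using jCE that(6) lca_upper[of Y T] by blast
      moreover have "j \<in> lca T X" using j(1) lca_mono[OF that(7)] by blast
      moreover have "lca T X \<inter> lca T Y = {}"
        using lca_children_disjoint[OF assms(1-5) that(1,2)] that(3-6) E by simp
      ultimately show False by blast
    qed
    moreover have "C \<subseteq> A \<or> C \<subseteq> B"
      using is_tree_psubset_child[OF assms(3) AB(1,2) assms(6) AB(5)] AB(6) jCE \<open>j \<notin> C\<close> by blast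
    ultimately show False using AB by (metis Int_commute Un_commute)
  qed
  then show ?thesis using lca_upper[of C T] C(2) by blast
qed

lemma is_tree_subset_eq:
  assumes "finite J" "is_tree J S" "is_tree J S'" "S \<subseteq> S'"
  shows "S = S'"
proof (rule ccontr)
  assume "S \<noteq> S'"
  then obtain X where X: "X \<in> S'" "X \<notin> S" using assms(4) by blast
  have "X \<noteq> {}" "X \<subseteq> J" using is_tree_memD[OF assms(3) X(1)] by auto
  then have E: "lca S X \<in> S" by (rule lca_mem[OF assms(1,2)])
  have "X \<noteq> lca S X" using E X(2) by auto
  then have XE: "X \<subset> lca S X" using lca_upper[of X S] by auto
  then have "\<not> is_singleton (lca S X)"
    using \<open>X \<noteq> {}\<close> by (metis is_singletonE psubset_eq subset_singleton_iff)
  then obtain A B where AB: "A \<in> S" "B \<in> S" "A \<noteq> {}" "B \<noteq> {}" "A \<inter> B = {}" "A \<union> B = lca S X"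
    by (rule is_tree_split[OF assms(2) E])
  have "X \<subseteq> A \<or> X \<subseteq> B"
    using is_tree_psubset_child[OF assms(3) _ _ X(1) AB(5)] AB(1,2,6) XE assms(4) by blast
  then have "lca S X \<subseteq> A \<or> lca S X \<subseteq> B" using lca_least AB(1,2) by blast
  then show False using AB(3-6) by blast
qed


lemma inj_on_lca_subset_restrict_tree:
  assumes "finite I" "is_tree I T" "is_tree J S" "J \<subseteq> I" "inj_on (lca T) S"
  shows "S \<subseteq> restrict_tree J T"
proof
  fix C assume "C \<in> S"
  then have "C \<noteq> {}" "C \<subseteq> I" using is_tree_memD[OF assms(3)] assms(4) by blast+
  then have "lca T C \<in> T" by (rule lca_mem[OF assms(1,2)])
  moreover have "lca T C \<inter> J = C" by (rule inj_on_lca_Int_eq[OF assms \<open>C \<in> S\<close>])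
  ultimately show "C \<in> restrict_tree J T"
    using restrict_tree_memI[of "lca T C" T J] \<open>C \<noteq> {}\<close> by simp
qed

lemma forest_le_imp_eq_restrict_tree:
  assumes "finite I" "is_tree I T" "J \<subseteq> I" "is_tree J S" "S \<in> F" "forest_le I F {T}"
  shows "S = restrict_tree J T"
proof -
  obtain \<phi> where \<phi>: "\<forall>C\<in>S. \<phi> C \<in> T" "\<forall>A\<in>S. \<forall>C\<in>S. A \<subseteq> C \<longrightarrow> \<phi> A \<subseteq> \<phi> C"
    "\<forall>C\<in>S. is_singleton C \<longrightarrow> \<phi> C = C" "inj_on \<phi> S"
    "\<forall>A\<in>S. \<forall>B\<in>S. \<forall>C\<in>S. A \<noteq> {} \<and> B \<noteq> {} \<and> A \<inter> B = {} \<and> A \<union> B = C \<longrightarrow>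
       \<not> (\<exists>D\<in>T. D \<subset> \<phi> C \<and> \<phi> A \<subseteq> D \<and> \<phi> B \<subseteq> D)"
    by (rule forest_le_treeE[OF assms(6,5)])
  have "inj_on (lca T) S"
    using \<phi>(4) tree_map_eq_lca[OF assms(1,2,4,3) \<phi>(1,2,3,5)] by (simp cong: inj_on_cong)
  then have "S \<subseteq> restrict_tree J T"
    by (rule inj_on_lca_subset_restrict_tree[OF assms(1,2,4,3)])
  moreover have "is_tree J (restrict_tree J T)"
    using is_tree_restrict_tree[OF assms(1-3)] is_tree_memD[OF assms(4) is_tree_top[OF assms(4)]] by blast
  ultimately show ?thesis
    using is_tree_subset_eq[OF finite_subset[OF assms(3,1)] assms(4)] by blast
qed

theorem lemma3p2:
  fixes I J :: "'a set" and T :: "'a set set"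
  assumes "finite I" and "is_tree I T" and "J \<subseteq> I" and "J \<noteq> {}"
  shows "\<exists>!TJ. is_tree J TJ \<and> forest_le I (insert TJ (trivial_forest (I - J))) {T}"
proof (rule ex1I[of _ "restrict_tree J T"])
  have tree: "is_tree J (restrict_tree J T)" by (rule is_tree_restrict_tree[OF assms])
  moreover have "forest_le I (insert (restrict_tree J T) (trivial_forest (I - J))) {T}"
    using inj_on_lca_imp_forest_le[OF assms(1,2) is_forest_insert_trivial_forest[OF tree assms(3)]
        inj_on_lca_restrict_forest[OF assms(2)]] .
  ultimately show "is_tree J (restrict_tree J T) \<and>
      forest_le I (insert (restrict_tree J T) (trivial_forest (I - J))) {T}" ..
next
  fix S assume "is_tree J S \<and> forest_le I (insert S (trivial_forest (I - J))) {T}"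
  then show "S = restrict_tree J T"
    using forest_le_imp_eq_restrict_tree[OF assms(1-3) _ insertI1] by blast
qed

end
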